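(* Consider the following slotted system without diversity. There are $N\ge 2$ users and time slots $t=1,\dots,T$. In each slot a base station (BS) schedules exactly one user, using the uniform randomized algorithm: in every slot, independently of everything else, each user is scheduled with probability $\frac1N$. An adversary chooses a blocking matrix $\sigma=(\sigma_i(t))\in\{0,1\}^{N\times T}$, where $\sigma_i(t)=0$ means that the channel to user $i$ is blocked in slot $t$. The matrix $\sigma$ is feasible if $\sum_{i=1}^N\sum_{t=1}^T(1-\sigma_i(t))\le \alpha T$ and $\sum_{i=1}^N(1-\sigma_i(t))\le 1$ for every $t$, where $0<\alpha<1$ and $\alpha T$ is an integer. The ages satisfy $a_i(1)=1$; if user $i$ is scheduled in slot $t$ and $\sigma_i(t)=1$ then $a_i(t+1)=1$, and otherwise $a_i(t+1)=a_i(t)+1$. The average age is $\Delta^{\sigma}=\frac1T\sum_{t=1}^T\frac1N\sum_{i=1}^N\mathbb{E}[a_i(t)]$. Then there exists a feasible blocking matrix maximizing $\Delta^{\sigma}$ over all feasible $\sigma$ whose blocked slots all belong to a single user and form a set of consecutive time slots. Moreover, the blocked user may be chosen arbitrarily.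
   Context: The expectation is over the random scheduling choices of the BS. The adversary's matrix $\sigma$ is fixed (deterministic). *)

theory Defs
  imports "HOL-Probability.Probability"
begin

text \<open>Users are indexed by 0..N-1, slots by 1..T.  A schedule s assigns to each slot t in {1..T} the
  scheduled user s t < N.\<close>

definition schedules :: "nat \<Rightarrow> nat \<Rightarrow> (nat \<Rightarrow> nat) set" where
  "schedules N T = PiE {1..T} (\<lambda>_. {..<N})"

text \<open>Uniform randomized algorithm: independently in each slot, each user with
  probability 1/N; equivalently, the schedule is uniform on all schedules.\<close>
definition uniform_sched :: "nat \<Rightarrow> nat \<Rightarrow> (nat \<Rightarrow> nat) pmf" where
  "uniform_sched N T = pmf_of_set (schedules N T)"

text \<open>Age a_i(t): a_i(1) = 1; a_i(t+1) = 1 if i scheduled in t and sigma_i(t) = 1,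
  else a_i(t)+1.  (The value at t = 0 is irrelevant.)\<close>
fun age :: "(nat \<Rightarrow> nat \<Rightarrow> nat) \<Rightarrow> (nat \<Rightarrow> nat) \<Rightarrow> nat \<Rightarrow> nat \<Rightarrow> nat" where
  "age \<sigma> s i 0 = 1"
| "age \<sigma> s i (Suc t) =
     (if t = 0 then 1 else if s t = i \<and> \<sigma> i t = 1 then 1 else age \<sigma> s i t + 1)"

definition avg_age :: "nat \<Rightarrow> nat \<Rightarrow> (nat \<Rightarrow> nat \<Rightarrow> nat) \<Rightarrow> real" where
  "avg_age N T \<sigma> = (1 / real T) * (\<Sum>t=1..T. (1 / real N) *
      (\<Sum>i<N. measure_pmf.expectation (uniform_sched N T) (\<lambda>s. real (age \<sigma> s i t))))"

definition feasible :: "nat \<Rightarrow> nat \<Rightarrow> real \<Rightarrow> (nat \<Rightarrow> nat \<Rightarrow> nat) \<Rightarrow> bool" where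
  "feasible N T \<alpha> \<sigma> \<longleftrightarrow>
     (\<forall>i<N. \<forall>t\<in>{1..T}. \<sigma> i t \<in> {0, 1}) \<and>
     real (\<Sum>i<N. \<Sum>t=1..T. (1 - \<sigma> i t)) \<le> \<alpha> * real T \<and>
     (\<forall>t\<in>{1..T}. (\<Sum>i<N. (1 - \<sigma> i t)) \<le> 1)"

end

theory Submission
  imports Defs
begin

(* Weight every slot of user i by 1 if i is blocked in it and by q = 1 - 1/N otherwise.
   Scheduling is uniform and independent, so the expected age of user i at slot t is the sum
   of the products of the weights over all suffixes of the slots 1..t-1, and the summed
   expected age of user i is the sum of these products over all segments of the slots
   1..T-1: its age profile.

   A slot is blocked for at most one user, and the profile is superadditive on disjoint sets
   of blocked slots, so giving all blocked slots to one user does not decrease the total.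
   For a single user, two runs of x and y blocked slots separated by a stretch M can be
   merged by moving either run next to the other: x + y times the original profile, plus the
   nonnegative defect x y (x + y) (1 - prod M), is the y, x weighted sum of the profiles of
   the two merged arrangements, so one of them is at least as good.  Hence some interval is
   optimal, and by monotonicity it may be taken to exhaust the budget alpha T. *)

fun sum_prefix_prods :: "real list \<Rightarrow> real" where
  "sum_prefix_prods [] = 1"
| "sum_prefix_prods (x # xs) = 1 + x * sum_prefix_prods xs"

fun sum_suffix_prods :: "real list \<Rightarrow> real" where
  "sum_suffix_prods [] = 1"
| "sum_suffix_prods (x # xs) = sum_suffix_prods xs + x * prod_list xs"

fun sum_segment_prods :: "real list \<Rightarrow> real" where
  "sum_segment_prods [] = 1"
| "sum_segment_prods (x # xs) = sum_segment_prods xs + sum_prefix_prods (x # xs)"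

lemma sum_prefix_prods_append:
  "sum_prefix_prods (xs @ ys) = sum_prefix_prods xs + prod_list xs * (sum_prefix_prods ys - 1)"
  by (induction xs) (simp_all, simp_all add: algebra_simps)

lemma sum_suffix_prods_append:
  "sum_suffix_prods (xs @ ys) = sum_suffix_prods ys + prod_list ys * (sum_suffix_prods xs - 1)"
  by (induction xs) (simp_all, simp_all add: algebra_simps)

lemma sum_segment_prods_append:
  "sum_segment_prods (xs @ ys) = sum_segment_prods xs + sum_segment_prods ys - 1
     + (sum_suffix_prods xs - 1) * (sum_prefix_prods ys - 1)"
  by (induction xs) (simp_all add: sum_prefix_prods_append, simp_all add: algebra_simps)

lemma sum_suffix_prods_snoc: "sum_suffix_prods (xs @ [x]) = 1 + x * sum_suffix_prods xs"
  by (simp add: sum_suffix_prods_append algebra_simps)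

lemma sum_segment_prods_snoc:
  "sum_segment_prods (xs @ [x]) = sum_segment_prods xs + sum_suffix_prods (xs @ [x])"
  by (simp add: sum_segment_prods_append sum_suffix_prods_append algebra_simps)

lemma sum_prefix_prods_replicate_1: "sum_prefix_prods (replicate n 1) = real n + 1"
  by (induction n) simp_all

lemma sum_suffix_prods_replicate_1: "sum_suffix_prods (replicate n 1) = real n + 1"
  by (induction n) simp_all

lemma sum_segment_prods_replicate_1:
  "sum_segment_prods (replicate n 1) = (real n + 1) * (real n + 2) / 2"
  by (induction n) (simp_all add: sum_prefix_prods_replicate_1 field_simps)

lemma sum_segment_prods_merge_runs_identity:
  fixes A M B :: "real list"
  shows "real (x + y) * sum_segment_prods (A @ replicate x 1 @ M @ replicate y 1 @ B)
     + real (x * y * (x + y)) * (1 - prod_list M)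
   = real y * sum_segment_prods (A @ M @ replicate (x + y) 1 @ B)
     + real x * sum_segment_prods (A @ replicate (x + y) 1 @ M @ B)"
  by (simp only: sum_segment_prods_append sum_suffix_prods_append sum_prefix_prods_append
      prod_list.append sum_suffix_prods_replicate_1 sum_prefix_prods_replicate_1 prod_list_replicate
      power_one sum_segment_prods_replicate_1) (simp add: field_simps)

lemma sum_segment_prods_merge_runs:
  assumes "prod_list M \<le> 1"
  shows "sum_segment_prods (A @ replicate x 1 @ M @ replicate y 1 @ B)
     \<le> max (sum_segment_prods (A @ M @ replicate (x + y) 1 @ B))
             (sum_segment_prods (A @ replicate (x + y) 1 @ M @ B))"
    (is "?S \<le> max ?P ?Q")
proof (cases "x + y = 0")
  case False
  have "real (x + y) * ?S \<le> real (x + y) * ?S + real (x * y * (x + y)) * (1 - prod_list M)"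
    using assms by simp
  also have "\<dots> = real y * ?P + real x * ?Q"
    by (rule sum_segment_prods_merge_runs_identity)
  also have "\<dots> \<le> real (x + y) * max ?P ?Q"
    using mult_left_mono[OF max.cobounded1, of "real y" ?P ?Q]
      mult_left_mono[OF max.cobounded2, of "real x" ?Q ?P] by (simp add: algebra_simps)
  finally show ?thesis
    using False by simp
qed simp

lemma sum_prefix_prods_ge_1: "\<forall>x\<in>set xs. 0 \<le> x \<Longrightarrow> 1 \<le> sum_prefix_prods xs"
  by (induction xs) auto

lemma sum_prefix_prods_mono:
  "list_all2 (\<lambda>x y. 0 \<le> x \<and> x \<le> y) xs ys \<Longrightarrow> sum_prefix_prods xs \<le> sum_prefix_prods ys"
proof (induction rule: list_all2_induct)
  case (Cons x xs y ys)
  have "0 \<le> sum_prefix_prods xs"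
    using sum_prefix_prods_ge_1[of xs] Cons.hyps(2) by (fastforce simp: list_all2_conv_all_nth in_set_conv_nth)
  then show ?case
    using Cons by (simp add: mult_mono)
qed simp

lemma sum_segment_prods_mono:
  "list_all2 (\<lambda>x y. 0 \<le> x \<and> x \<le> y) xs ys \<Longrightarrow> sum_segment_prods xs \<le> sum_segment_prods ys"
proof (induction rule: list_all2_induct)
  case (Cons x xs y ys)
  then have "sum_prefix_prods (x # xs) \<le> sum_prefix_prods (y # ys)"
    by (intro sum_prefix_prods_mono) simp
  with Cons.IH show ?case
    by simp
qed simp

definition slot_weight :: "real \<Rightarrow> bool \<Rightarrow> real" where
  "slot_weight q blocked = (if blocked then 1 else q)"

lemma slot_weight_simps [simp]: "slot_weight q True = 1" "slot_weight q False = q"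
  by (simp_all add: slot_weight_def)

definition age_profile :: "real \<Rightarrow> bool list \<Rightarrow> real" where
  "age_profile q bs = sum_segment_prods (map (slot_weight q) bs)"

lemma age_profile_mono:
  assumes "0 \<le> q" "q \<le> 1" and "\<forall>t\<in>set ts. P t \<longrightarrow> Q t"
  shows "age_profile q (map P ts) \<le> age_profile q (map Q ts)"
  unfolding age_profile_def using assms
  by (intro sum_segment_prods_mono) (auto simp: list_all2_conv_all_nth slot_weight_def)

lemma sum_prefix_prods_superadditive:
  assumes q: "0 \<le> q" "q \<le> 1" and disj: "\<forall>t\<in>set ts. \<not> (P t \<and> Q t)"
  shows "sum_prefix_prods (map (slot_weight q) (map P ts))
       + sum_prefix_prods (map (slot_weight q) (map Q ts))
     \<le> sum_prefix_prods (map (slot_weight q) (map (\<lambda>t. P t \<or> Q t) ts))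
       + sum_prefix_prods (map (slot_weight q) (map (\<lambda>_. False) ts))"
  using disj
proof (induction ts)
  case (Cons t ts)
  let ?S = "\<lambda>R. sum_prefix_prods (map (slot_weight q) (map R ts))"
  have IH: "?S P + ?S Q \<le> ?S (\<lambda>t. P t \<or> Q t) + ?S (\<lambda>_. False)"
    using Cons by simp
  have "?S (\<lambda>_. False) \<le> ?S R" for R
    using q by (intro sum_prefix_prods_mono) (auto simp: list_all2_conv_all_nth slot_weight_def)
  then have shrink: "q * (?S R - ?S (\<lambda>_. False)) \<le> ?S R - ?S (\<lambda>_. False)" for R
    using q by (intro mult_left_le_one_le) simp_all
  have "q * (?S P + ?S Q) \<le> q * (?S (\<lambda>t. P t \<or> Q t) + ?S (\<lambda>_. False))"
    using IH q(1) by (rule mult_left_mono)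
  then show ?case
    using Cons.prems shrink[of P] shrink[of Q] IH by (cases "P t"; cases "Q t") (auto simp: algebra_simps)
qed simp

lemma age_profile_superadditive:
  assumes "0 \<le> q" "q \<le> 1" and "\<forall>t\<in>set ts. \<not> (P t \<and> Q t)"
  shows "age_profile q (map P ts) + age_profile q (map Q ts)
     \<le> age_profile q (map (\<lambda>t. P t \<or> Q t) ts) + age_profile q (map (\<lambda>_. False) ts)"
  using assms(3)
proof (induction ts)
  case (Cons t ts)
  then show ?case
    using sum_prefix_prods_superadditive[OF assms(1,2), of "t # ts" P Q]
    by (simp add: age_profile_def del: sum_prefix_prods.simps)
qed (simp add: age_profile_def)

lemma sum_age_profiles_le_merged:
  assumes q: "0 \<le> q" "q \<le> 1"
    and disj: "\<forall>t\<in>set ts. \<forall>i<n. \<forall>j<n. \<beta> i t \<and> \<beta> j t \<longrightarrow> i = j"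
  shows "(\<Sum>i<n. age_profile q (map (\<beta> i) ts))
     \<le> age_profile q (map (\<lambda>t. \<exists>i<n. \<beta> i t) ts) + (real n - 1) * age_profile q (map (\<lambda>_. False) ts)"
  using disj
proof (induction n)
  case (Suc n)
  have IH: "(\<Sum>i<n. age_profile q (map (\<beta> i) ts))
     \<le> age_profile q (map (\<lambda>t. \<exists>i<n. \<beta> i t) ts) + (real n - 1) * age_profile q (map (\<lambda>_. False) ts)"
    using Suc by (meson less_SucI)
  have split: "(\<lambda>t. \<exists>i<Suc n. \<beta> i t) = (\<lambda>t. (\<exists>i<n. \<beta> i t) \<or> \<beta> n t)"
    by (auto simp: less_Suc_eq)
  have "\<forall>t\<in>set ts. \<not> ((\<exists>i<n. \<beta> i t) \<and> \<beta> n t)"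
    using Suc.prems by (metis less_Suc_eq nat_neq_iff)
  then have "age_profile q (map (\<lambda>t. \<exists>i<n. \<beta> i t) ts) + age_profile q (map (\<beta> n) ts)
      \<le> age_profile q (map (\<lambda>t. \<exists>i<Suc n. \<beta> i t) ts) + age_profile q (map (\<lambda>_. False) ts)"
    unfolding split by (rule age_profile_superadditive[OF q])
  with IH show ?case
    by (simp add: algebra_simps)
qed simp

definition interval_mask :: "nat \<Rightarrow> nat \<Rightarrow> nat \<Rightarrow> bool list" where
  "interval_mask L p k = map (\<lambda>j. p \<le> j \<and> j < p + k) [0..<L]"

lemma interval_mask_eq_replicate:
  "interval_mask (p + k + r) p k = replicate p False @ replicate k True @ replicate r False"
  by (rule nth_equalityI) (auto simp: interval_mask_def nth_append)

lemma age_profile_leading_run_le_interval_mask: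
  assumes q: "0 \<le> q" "q \<le> 1" and "count_list r True = n"
  shows "\<exists>p'. p' + (x + n) \<le> p + x + length r \<and>
     age_profile q (replicate p False @ replicate x True @ r)
       \<le> age_profile q (interval_mask (p + x + length r) p' (x + n))"
  using assms(3)
proof (induction n arbitrary: p x r)
  case 0
  then have "replicate (length r) False = r"
    by (metis (full_types) count_list_0_iff replicate_length_same)
  then have "interval_mask (p + x + length r) p x = replicate p False @ replicate x True @ r"
    using interval_mask_eq_replicate[of p x "length r"] by simp
  then show ?case
    by (intro exI[of _ p]) simp
next
  case (Suc n)
  obtain pref rest where r: "r = pref @ True # rest" and "True \<notin> set pref"
    and rest: "count_list rest True = n"
    using count_list_Suc_split_first[OF Suc.prems] by blast
  define m where "m = length pref"
  have pref: "pref = replicate m False"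
    using \<open>True \<notin> set pref\<close> unfolding m_def by (metis (full_types) replicate_length_same)
  have merge: "age_profile q (replicate p False @ replicate x True @ r)
     \<le> max (age_profile q (replicate (p + m) False @ replicate (x + 1) True @ rest))
            (age_profile q (replicate p False @ replicate (x + 1) True @ replicate m False @ rest))"
    using sum_segment_prods_merge_runs[of "replicate m q" "replicate p q" x 1 "map (slot_weight q) rest"] q
    by (simp add: age_profile_def r pref replicate_add power_le_one)
  have len: "p + m + (x + 1) + length rest = p + x + length r"
      "p + (x + 1) + length (replicate m False @ rest) = p + x + length r"
    by (simp_all add: r m_def)
  have cnt: "count_list (replicate m False @ rest) True = n"
    using rest by simp
  show ?case
    using merge Suc.IH[OF rest, where p = "p + m" and x = "x + 1"]
      Suc.IH[OF cnt, where p = p and x = "x + 1"]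
    unfolding le_max_iff_disj len by (auto intro: order_trans)
qed

lemma age_profile_le_interval_mask:
  assumes "0 \<le> q" "q \<le> 1"
  shows "\<exists>p. p + count_list bs True \<le> length bs \<and>
     age_profile q bs \<le> age_profile q (interval_mask (length bs) p (count_list bs True))"
  using age_profile_leading_run_le_interval_mask[OF assms refl, where p = 0 and x = 0] by simp

lemma interval_mask_maximizes_age_profile:
  assumes q: "0 \<le> q" "q \<le> 1" and "K \<le> L"
  obtains p where "p + K \<le> L"
    and "\<And>bs. length bs = L \<Longrightarrow> count_list bs True \<le> K
           \<Longrightarrow> age_profile q bs \<le> age_profile q (interval_mask L p K)"
proof -
  let ?f = "\<lambda>p. age_profile q (interval_mask L p K)"
  let ?I = "{p. p + K \<le> L}"
  have "finite ?I"
    by (rule finite_subset[of _ "{..L}"]) auto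
  moreover have "0 \<in> ?I"
    using \<open>K \<le> L\<close> by simp
  ultimately obtain p0 where p0: "p0 \<in> ?I" "?f p0 = Max (?f ` ?I)"
    using Max_in[of "?f ` ?I"] by fastforce
  have "age_profile q bs \<le> ?f p0" if "length bs = L" and "count_list bs True \<le> K" for bs
  proof -
    obtain p where p: "p + count_list bs True \<le> L"
      and bs: "age_profile q bs \<le> age_profile q (interval_mask L p (count_list bs True))"
      using age_profile_le_interval_mask[OF q, of bs] \<open>length bs = L\<close> by auto
    define p' where "p' = min p (L - K)"
    have "age_profile q (interval_mask L p (count_list bs True)) \<le> ?f p'"
      unfolding interval_mask_def using q p \<open>count_list bs True \<le> K\<close>
      by (intro age_profile_mono) (auto simp: p'_def)
    also have "\<dots> \<le> ?f p0"
      using p0 \<open>finite ?I\<close> \<open>K \<le> L\<close> by (simp add: p'_def)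
    finally show ?thesis
      using bs by linarith
  qed
  then show thesis
    using that p0(1) by blast
qed

lemma age_cong: "\<forall>k<t. s k = s' k \<Longrightarrow> age \<sigma> s i t = age \<sigma> s' i t"
  by (induction t) auto

lemma finite_schedules: "finite (schedules N T)"
  unfolding schedules_def by (simp add: finite_PiE)

lemma schedules_nonempty: "N \<ge> 1 \<Longrightarrow> schedules N T \<noteq> {}"
  unfolding schedules_def by (auto simp: PiE_eq_empty_iff lessThan_empty_iff)

lemma schedules_slot_less: "s \<in> schedules N T \<Longrightarrow> t \<in> {1..T} \<Longrightarrow> s t < N"
  unfolding schedules_def by (auto simp: PiE_iff)

lemma sum_schedules_slot_swap:
  fixes G :: "(nat \<Rightarrow> nat) \<Rightarrow> real"
  assumes "i < N" "j < N" "t \<in> {1..T}" and G: "\<And>s x. G (s(t := x)) = G s"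
  shows "(\<Sum>s\<in>schedules N T. if s t = i then G s else 0)
       = (\<Sum>s\<in>schedules N T. if s t = j then G s else 0)"
proof -
  let ?swap = "\<lambda>s. s(t := if s t = i then j else if s t = j then i else s t)"
  have swap_in: "?swap s \<in> schedules N T" if "s \<in> schedules N T" for s
    using that assms schedules_slot_less[OF that \<open>t \<in> {1..T}\<close>]
    unfolding schedules_def by (auto simp: PiE_iff extensional_def)
  show ?thesis
    by (rule sum.reindex_bij_witness[where i = ?swap and j = ?swap]) (auto simp: swap_in G)
qed

lemma sum_schedules_slot:
  fixes G :: "(nat \<Rightarrow> nat) \<Rightarrow> real"
  assumes "i < N" "t \<in> {1..T}" and "\<And>s x. G (s(t := x)) = G s"
  shows "real N * (\<Sum>s\<in>schedules N T. if s t = i then G s else 0) = (\<Sum>s\<in>schedules N T. G s)"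
proof -
  have "(\<Sum>s\<in>schedules N T. G s) = (\<Sum>s\<in>schedules N T. \<Sum>j<N. if s t = j then G s else 0)"
    using schedules_slot_less[OF _ \<open>t \<in> {1..T}\<close>] by (intro sum.cong) auto
  also have "\<dots> = (\<Sum>j<N. \<Sum>s\<in>schedules N T. if s t = j then G s else 0)"
    by (rule sum.swap)
  also have "\<dots> = (\<Sum>j<N. \<Sum>s\<in>schedules N T. if s t = i then G s else 0)"
    using assms by (intro sum.cong refl sum_schedules_slot_swap[symmetric]) auto
  finally show ?thesis
    by simp
qed

(* As in the age recursion, user i counts as blocked in slot k iff sigma i k \<noteq> 1; for feasible
   sigma this means sigma i k = 0. *)
definition blocked_slots :: "(nat \<Rightarrow> nat \<Rightarrow> nat) \<Rightarrow> nat \<Rightarrow> nat \<Rightarrow> bool list" where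
  "blocked_slots \<sigma> i t = map (\<lambda>k. \<sigma> i k \<noteq> 1) [1..<t]"

lemma sum_schedules_age_Suc:
  assumes "N \<ge> 1" "i < N" "1 \<le> t" "t < T"
  shows "(\<Sum>s\<in>schedules N T. real (age \<sigma> s i (Suc t)))
     = real (card (schedules N T))
       + slot_weight (1 - 1 / real N) (\<sigma> i t \<noteq> 1) * (\<Sum>s\<in>schedules N T. real (age \<sigma> s i t))"
proof -
  let ?X = "schedules N T"
  let ?a = "\<lambda>s. real (age \<sigma> s i t)"
  show ?thesis
  proof (cases "\<sigma> i t = 1")
    case True
    have "real (age \<sigma> s i (Suc t)) = ?a s + 1 - (if s t = i then ?a s else 0)" for s
      using \<open>1 \<le> t\<close> True by auto
    then have "(\<Sum>s\<in>?X. real (age \<sigma> s i (Suc t)))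
        = (\<Sum>s\<in>?X. ?a s) + real (card ?X) - (\<Sum>s\<in>?X. if s t = i then ?a s else 0)"
      by (simp add: sum_subtractf sum.distrib del: age.simps)
    also have "(\<Sum>s\<in>?X. if s t = i then ?a s else 0) = (1 / real N) * (\<Sum>s\<in>?X. ?a s)"
    proof -
      have "?a (s(t := x)) = ?a s" for s x
        using age_cong[of t "s(t := x)" s] by simp
      then have "real N * (\<Sum>s\<in>?X. if s t = i then ?a s else 0) = (\<Sum>s\<in>?X. ?a s)"
        using assms by (intro sum_schedules_slot) auto
      then show ?thesis
        using \<open>N \<ge> 1\<close> by (simp add: field_simps)
    qed
    finally show ?thesis
      using True by (simp add: algebra_simps del: age.simps)
  next
    case False
    then show ?thesis
      using \<open>1 \<le> t\<close> by (simp add: sum.distrib)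
  qed
qed

lemma sum_schedules_age:
  assumes "N \<ge> 1" "i < N" "1 \<le> t" "t \<le> T"
  shows "(\<Sum>s\<in>schedules N T. real (age \<sigma> s i t))
     = real (card (schedules N T)) * sum_suffix_prods (map (slot_weight (1 - 1 / real N)) (blocked_slots \<sigma> i t))"
  using \<open>1 \<le> t\<close> \<open>t \<le> T\<close>
proof (induction t rule: dec_induct)
  case (step t)
  then show ?case
    using sum_schedules_age_Suc[OF assms(1,2) step.hyps(1), of T \<sigma>]
    by (simp add: blocked_slots_def sum_suffix_prods_snoc algebra_simps)
qed (simp add: blocked_slots_def)

lemma expectation_age:
  assumes "N \<ge> 1" "i < N" "t \<in> {1..T}"
  shows "measure_pmf.expectation (uniform_sched N T) (\<lambda>s. real (age \<sigma> s i t))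
     = sum_suffix_prods (map (slot_weight (1 - 1 / real N)) (blocked_slots \<sigma> i t))"
  using assms sum_schedules_age[OF assms(1,2), of t T \<sigma>] schedules_nonempty[OF assms(1), of T] finite_schedules
  by (simp add: uniform_sched_def integral_pmf_of_set card_gt_0_iff)

lemma sum_segment_prods_upt:
  "1 \<le> T \<Longrightarrow> sum_segment_prods (map c [1..<T]) = (\<Sum>t=1..T. sum_suffix_prods (map c [1..<t]))"
  by (induction T rule: dec_induct) (simp_all add: sum_segment_prods_snoc)

lemma age_profile_blocked_slots_eq:
  "1 \<le> T \<Longrightarrow> age_profile q (blocked_slots \<sigma> i T)
     = (\<Sum>t=1..T. sum_suffix_prods (map (slot_weight q) (blocked_slots \<sigma> i t)))"
  unfolding age_profile_def blocked_slots_def map_map by (rule sum_segment_prods_upt)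

lemma avg_age_eq_sum_age_profiles:
  assumes "N \<ge> 1"
  shows "avg_age N T \<sigma> = (\<Sum>i<N. age_profile (1 - 1 / real N) (blocked_slots \<sigma> i T)) / (real T * real N)"
proof (cases "T = 0")
  case False
  have "avg_age N T \<sigma> = (\<Sum>t=1..T. \<Sum>i<N.
      sum_suffix_prods (map (slot_weight (1 - 1 / real N)) (blocked_slots \<sigma> i t))) / (real T * real N)"
    unfolding avg_age_def using assms False
    by (simp add: expectation_age flip: sum_distrib_left) (simp add: field_simps flip: sum_divide_distrib)
  also have "\<dots> = (\<Sum>i<N. age_profile (1 - 1 / real N) (blocked_slots \<sigma> i T)) / (real T * real N)"
    using False by (subst sum.swap) (simp add: age_profile_blocked_slots_eq)
  finally show ?thesis .
qed (simp add: avg_age_def)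

lemma feasible_blocked_unique:
  assumes "feasible N T \<alpha> \<sigma>" "t \<in> {1..T}" "i < N" "j < N" "\<sigma> i t \<noteq> 1" "\<sigma> j t \<noteq> 1"
  shows "i = j"
proof (rule ccontr)
  assume "i \<noteq> j"
  have "\<sigma> k t \<in> {0, 1}" if "k < N" for k
    using assms(1,2) that unfolding feasible_def by blast
  then have "\<sigma> i t = 0" "\<sigma> j t = 0"
    using assms(3-6) by auto
  with \<open>i \<noteq> j\<close> have "2 = (\<Sum>k\<in>{i, j}. 1 - \<sigma> k t)"
    by simp
  also have "\<dots> \<le> (\<Sum>k<N. 1 - \<sigma> k t)"
    using assms by (intro sum_mono2) auto
  also have "\<dots> \<le> 1"
    using assms unfolding feasible_def by auto
  finally show False
    by simp
qed

lemma feasible_count_blocked_le: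
  assumes "feasible N T \<alpha> \<sigma>" "real K = \<alpha> * real T"
  shows "count_list (map (\<lambda>t. \<exists>i<N. \<sigma> i t \<noteq> 1) [1..<T]) True \<le> K"
proof -
  let ?U = "\<lambda>t. \<exists>i<N. \<sigma> i t \<noteq> 1"
  have "count_list (map ?U [1..<T]) True = (\<Sum>t\<in>{1..<T}. if ?U t then 1 else 0)"
    by (simp add: count_list_eq_length_filter filter_map comp_def distinct_length_filter
        sum.If_cases Int_commute)
  also have "\<dots> \<le> (\<Sum>t\<in>{1..<T}. \<Sum>i<N. 1 - \<sigma> i t)"
  proof (rule sum_mono)
    fix t assume "t \<in> {1..<T}"
    show "(if ?U t then 1 else 0) \<le> (\<Sum>i<N. 1 - \<sigma> i t)"
    proof (cases "?U t")
      case True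
      then obtain i where "i < N" "\<sigma> i t \<noteq> 1"
        by blast
      moreover have "\<sigma> i t \<in> {0, 1}"
        using assms(1) \<open>i < N\<close> \<open>t \<in> {1..<T}\<close> unfolding feasible_def by auto
      ultimately have "1 \<le> 1 - \<sigma> i t"
        by auto
      also have "\<dots> \<le> (\<Sum>i<N. 1 - \<sigma> i t)"
        using \<open>i < N\<close> by (intro member_le_sum) auto
      finally show ?thesis
        using True by simp
    qed simp
  qed
  also have "\<dots> \<le> (\<Sum>t\<in>{1..T}. \<Sum>i<N. 1 - \<sigma> i t)"
    by (rule sum_mono2) auto
  also have "\<dots> = (\<Sum>i<N. \<Sum>t=1..T. 1 - \<sigma> i t)"
    by (rule sum.swap)
  finally show ?thesis
    using assms unfolding feasible_def by linarith
qed

definition single_block :: "nat \<Rightarrow> nat \<Rightarrow> nat \<Rightarrow> nat \<Rightarrow> nat \<Rightarrow> nat" where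
  "single_block u a b i t = (if i = u \<and> t \<in> {a..<b} then 0 else 1)"

lemma feasible_single_block:
  assumes "u < N" "1 \<le> a" "b \<le> Suc T" "real (b - a) \<le> \<alpha> * real T"
  shows "feasible N T \<alpha> (single_block u a b)"
proof -
  have "(\<Sum>t=1..T. 1 - single_block u a b u t) = (\<Sum>t\<in>{1..T}. if t \<in> {a..<b} then 1 else 0)"
    by (intro sum.cong) (auto simp: single_block_def)
  also have "\<dots> = card ({1..T} \<inter> {a..<b})"
    by (subst sum.inter_restrict[symmetric]) simp_all
  also have "{1..T} \<inter> {a..<b} = {a..<b}"
    using assms(2,3) by auto
  finally have "(\<Sum>t=1..T. 1 - single_block u a b u t) = b - a"
    by simp
  then have "(\<Sum>t=1..T. 1 - single_block u a b i t) = (if i = u then b - a else 0)" for i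
    by (simp add: single_block_def)
  then have "(\<Sum>i<N. \<Sum>t=1..T. 1 - single_block u a b i t) = b - a"
    using \<open>u < N\<close> by simp
  moreover have "(\<Sum>i<N. 1 - single_block u a b i t) \<le> 1" for t
  proof -
    have "(\<Sum>i<N. 1 - single_block u a b i t) = (\<Sum>i<N. if i = u then 1 - single_block u a b u t else 0)"
      by (intro sum.cong) (auto simp: single_block_def)
    then show ?thesis
      using \<open>u < N\<close> by (simp add: single_block_def)
  qed
  ultimately show ?thesis
    using assms unfolding feasible_def by (auto simp: single_block_def)
qed

lemma blocked_slots_single_block_other:
  "i \<noteq> u \<Longrightarrow> blocked_slots (single_block u a b) i T = map (\<lambda>_. False) [1..<T]"
  by (simp add: blocked_slots_def single_block_def)

lemma blocked_slots_single_block_eq_interval_mask: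
  "blocked_slots (single_block u (Suc p) (Suc (p + k))) u T = interval_mask (T - 1) p k"
proof (cases T)
  case (Suc L)
  then have "[1..<T] = map Suc [0..<L]"
    by (simp add: map_Suc_upt)
  then show ?thesis
    using Suc by (simp add: blocked_slots_def single_block_def interval_mask_def)
qed (simp add: blocked_slots_def interval_mask_def)

lemma sum_age_profiles_single_block:
  assumes "u < N"
  shows "(\<Sum>i<N. age_profile q (blocked_slots (single_block u a b) i T))
     = age_profile q (blocked_slots (single_block u a b) u T)
       + (real N - 1) * age_profile q (map (\<lambda>_. False) [1..<T])"
  using assms by (simp add: sum.remove[of "{..<N}" u] blocked_slots_single_block_other of_nat_diff)

lemma blocking_budget:
  fixes \<alpha> :: real
  assumes "0 < \<alpha>" "\<alpha> < 1" "\<alpha> * real T \<in> \<int>"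
  obtains K :: nat where "real K = \<alpha> * real T" "K \<le> T - 1"
proof -
  obtain z where z: "\<alpha> * real T = real_of_int z"
    using assms(3) by (auto elim: Ints_cases)
  have "0 \<le> \<alpha> * real T"
    using assms(1) by simp
  moreover have "\<alpha> * real T < real T \<or> T = 0"
    using assms(2) by auto
  ultimately have "0 \<le> z" "z < int T \<or> T = 0 \<and> z = 0"
    using z by auto
  then show thesis
    using z by (intro that[of "nat z"]) auto
qed

lemma sum_age_profiles_le_single_block:
  assumes "feasible N T \<alpha> \<sigma>" "real K = \<alpha> * real T" "u < N" "0 \<le> q" "q \<le> 1"
    and interval_optimal: "\<And>bs. length bs = T - 1 \<Longrightarrow> count_list bs True \<le> K
      \<Longrightarrow> age_profile q bs \<le> age_profile q (interval_mask (T - 1) p K)"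
  shows "(\<Sum>i<N. age_profile q (blocked_slots \<sigma> i T))
     \<le> (\<Sum>i<N. age_profile q (blocked_slots (single_block u (Suc p) (Suc (p + K))) i T))"
proof -
  let ?Z = "age_profile q (map (\<lambda>_. False) [1..<T])"
  have "\<forall>t\<in>set [1..<T]. \<forall>i<N. \<forall>j<N. \<sigma> i t \<noteq> 1 \<and> \<sigma> j t \<noteq> 1 \<longrightarrow> i = j"
    using feasible_blocked_unique[OF assms(1)] by fastforce
  then have "(\<Sum>i<N. age_profile q (blocked_slots \<sigma> i T))
      \<le> age_profile q (map (\<lambda>t. \<exists>i<N. \<sigma> i t \<noteq> 1) [1..<T]) + (real N - 1) * ?Z"
    unfolding blocked_slots_def by (rule sum_age_profiles_le_merged[OF assms(4,5)])
  also have "\<dots> \<le> age_profile q (interval_mask (T - 1) p K) + (real N - 1) * ?Z"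
    using interval_optimal feasible_count_blocked_le[OF assms(1,2)] by simp
  also have "\<dots> = (\<Sum>i<N. age_profile q (blocked_slots (single_block u (Suc p) (Suc (p + K))) i T))"
    using \<open>u < N\<close>
    by (simp add: sum_age_profiles_single_block blocked_slots_single_block_eq_interval_mask)
  finally show ?thesis .
qed

theorem theorem1:
  fixes N T :: nat and \<alpha> :: real
  assumes "N \<ge> 2" and "0 < \<alpha>" and "\<alpha> < 1" and "\<alpha> * real T \<in> \<int>"
  shows "\<forall>u<N. \<exists>\<sigma>. feasible N T \<alpha> \<sigma> \<and>
           (\<forall>\<sigma>'. feasible N T \<alpha> \<sigma>' \<longrightarrow> avg_age N T \<sigma>' \<le> avg_age N T \<sigma>) \<and>
           (\<forall>i<N. \<forall>t\<in>{1..T}. \<sigma> i t = 0 \<longrightarrow> i = u) \<and>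
           (\<exists>a b. {t\<in>{1..T}. \<sigma> u t = 0} = {a..<b})"
proof (intro allI impI)
  fix u assume "u < N"
  define q where "q = 1 - 1 / real N"
  have q: "0 \<le> q" "q \<le> 1"
    using assms(1) by (simp_all add: q_def)
  obtain K where K: "real K = \<alpha> * real T" "K \<le> T - 1"
    using blocking_budget[OF assms(2-4)] by blast
  obtain p where p: "p + K \<le> T - 1" and opt: "\<And>bs. length bs = T - 1 \<Longrightarrow> count_list bs True \<le> K
      \<Longrightarrow> age_profile q bs \<le> age_profile q (interval_mask (T - 1) p K)"
    using interval_mask_maximizes_age_profile[OF q K(2)] by blast
  let ?\<sigma> = "single_block u (Suc p) (Suc (p + K))"
  have "avg_age N T \<sigma>' \<le> avg_age N T ?\<sigma>" if "feasible N T \<alpha> \<sigma>'" for \<sigma>'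
    using sum_age_profiles_le_single_block[OF that K(1) \<open>u < N\<close> q opt] assms(1)
    by (simp add: avg_age_eq_sum_age_profiles q_def divide_right_mono)
  moreover have "feasible N T \<alpha> ?\<sigma>"
    using \<open>u < N\<close> p K by (intro feasible_single_block) auto
  moreover have "{t\<in>{1..T}. ?\<sigma> u t = 0} = {Suc p..<Suc (p + K)}"
    using p by (auto simp: single_block_def)
  ultimately show "\<exists>\<sigma>. feasible N T \<alpha> \<sigma> \<and>
           (\<forall>\<sigma>'. feasible N T \<alpha> \<sigma>' \<longrightarrow> avg_age N T \<sigma>' \<le> avg_age N T \<sigma>) \<and>
           (\<forall>i<N. \<forall>t\<in>{1..T}. \<sigma> i t = 0 \<longrightarrow> i = u) \<and>
           (\<exists>a b. {t\<in>{1..T}. \<sigma> u t = 0} = {a..<b})"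
    by (intro exI[of _ ?\<sigma>]) (auto simp: single_block_def)
qed

end
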